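(* There exists a constant $B_3>0$ depending only on $d$ such that for all $p\in(1,\infty)$, $\alpha\in(0,d/p)$ and $q\in[p,\infty)$ with $\frac1q=\frac1p-\frac\alpha d$, \[ \frac{1}{B_3}S(p,q)\le\widetilde E_H(p,q,d)\le B_3\,S(p,q), \qquad\text{where } S(p,q)=\min\Big(\frac{q^{1/p'}}{p-1},\frac{{p'}^{1/q}}{q'-1}\Big). \]
   Context: Here $d\in\mathbb{N}^*$, $p'=p/(p-1)$, $q'=q/(q-1)$, $\omega_{d-1}$ is the surface measure of the unit sphere in $\mathbb{R}^d$, and \[ \widetilde E_H(p,q,d)=\frac{1}{(2\pi)^\alpha}\frac{\Gamma((d-\alpha)/2)}{\Gamma(\alpha/2)}\frac d\alpha\Big(\frac{\omega_{d-1}}{d}\Big)^{1-\frac\alpha d}\Big(1-\frac\alpha d\Big)^{1-\frac\alpha d}\frac{1}{pq'}\Big({p'}^{\frac1{p'}+\frac1q}+q^{\frac1{p'}+\frac1q}\Big). \] (This is Lieb's upper bound for the best constant of the homogeneous Sobolev embedding $\|\Delta^{-\alpha/2}f\|_{L^q(\mathbb{R}^d)}\le C\|f\|_{L^p(\mathbb{R}^d)}$.) *)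

theory Defs
  imports "HOL-Analysis.Analysis"
begin

definition sphere_area :: "nat \<Rightarrow> real" where
  "sphere_area d = 2 * pi powr (real d / 2) / Gamma (real d / 2)"

definition conj_exp :: "real \<Rightarrow> real" where
  "conj_exp p = p / (p - 1)"

text \<open>Lieb's upper bound; alpha is determined by 1/q = 1/p - alpha/d.\<close>
definition E_H_tilde :: "real \<Rightarrow> real \<Rightarrow> nat \<Rightarrow> real" where
  "E_H_tilde p q d =
    (let \<alpha> = real d * (1 / p - 1 / q); p' = conj_exp p; q' = conj_exp q in
     1 / (2 * pi) powr \<alpha> * (Gamma ((real d - \<alpha>) / 2) / Gamma (\<alpha> / 2)) * (real d / \<alpha>)
     * (sphere_area d / real d) powr (1 - \<alpha> / real d)
     * (1 - \<alpha> / real d) powr (1 - \<alpha> / real d)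
     * (1 / (p * q')) * (p' powr (1 / p' + 1 / q) + q powr (1 / p' + 1 / q)))"

definition S_pq :: "real \<Rightarrow> real \<Rightarrow> real" where
  "S_pq p q = min (q powr (1 / conj_exp p) / (p - 1))
                  (conj_exp p powr (1 / q) / (conj_exp q - 1))"

end

theory Submission
  imports Defs
begin

text \<open>
  Put u = 1/p' and v = 1/q, so that u + v = 1 - \<alpha>/d lies in (0, 1). Using
  \<Gamma>(x + 1) = x \<Gamma>(x), Lieb's constant splits into a factor depending only on d and \<alpha>
  times ((1/u)^(u+v) + (1/v)^(u+v)) (1 - u) (1 - v) / (u + v), while
  S(p, q) = min ((1/v)^u (1 - u)/u) ((1/u)^v (1 - v)/v).
  The first factor is bounded above and below uniformly for \<alpha> in (0, d), because \<Gamma> is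
  continuous and positive on [1, d/2 + 1] and s^s lies in [1/e, 1] for s in (0, 1].
  The second factor is within the constant e (1 + e) of S(p, q). It is at most e (1 + e) times
  each term of the minimum, because (1/x)^x lies in [1, e] for x in (0, 1] and
  u (1/u)^v \<le> e (u + v). Conversely, if v \<le> u then dropping the first summand shows that it is
  at least a quarter of the first term. The case u \<le> v is symmetric.
\<close>

definition comparable_on :: "'a set \<Rightarrow> ('a \<Rightarrow> real) \<Rightarrow> ('a \<Rightarrow> real) \<Rightarrow> bool" where
  "comparable_on A f g \<longleftrightarrow> (\<exists>B>0. \<forall>x\<in>A. g x / B \<le> f x \<and> f x \<le> B * g x)"

lemma comparable_on_oneI:
  assumes "0 < m" and bounds: "\<And>x. x \<in> A \<Longrightarrow> m \<le> f x \<and> f x \<le> M"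
  shows "comparable_on A f (\<lambda>_. 1)"
  unfolding comparable_on_def
proof (intro exI[of _ "max M (1 / m)"] conjI ballI)
  show "0 < max M (1 / m)"
    using \<open>0 < m\<close> by (simp add: less_max_iff_disj)
  fix x assume "x \<in> A"
  have "1 / max M (1 / m) \<le> 1 / (1 / m)"
    using \<open>0 < m\<close> by (intro divide_left_mono) (auto simp: less_max_iff_disj)
  then show "1 / max M (1 / m) \<le> f x" "f x \<le> max M (1 / m) * 1"
    using bounds[OF \<open>x \<in> A\<close>] by auto
qed

lemma comparable_on_mult:
  assumes "comparable_on A f g" "comparable_on A h k"
    and "\<And>x. x \<in> A \<Longrightarrow> 0 \<le> g x" "\<And>x. x \<in> A \<Longrightarrow> 0 \<le> k x"
  shows "comparable_on A (\<lambda>x. f x * h x) (\<lambda>x. g x * k x)"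
proof -
  obtain B where B: "0 < B" "\<And>x. x \<in> A \<Longrightarrow> g x / B \<le> f x \<and> f x \<le> B * g x"
    using assms(1) unfolding comparable_on_def by blast
  obtain C where C: "0 < C" "\<And>x. x \<in> A \<Longrightarrow> k x / C \<le> h x \<and> h x \<le> C * k x"
    using assms(2) unfolding comparable_on_def by blast
  have "g x * k x / (B * C) \<le> f x * h x \<and> f x * h x \<le> B * C * (g x * k x)" if "x \<in> A" for x
  proof
    have lower: "g x / B \<le> f x" "k x / C \<le> h x" and upper: "f x \<le> B * g x" "h x \<le> C * k x"
      using B(2) C(2) \<open>x \<in> A\<close> by auto
    have "0 \<le> g x / B" "0 \<le> k x / C"
      using assms(3,4) \<open>x \<in> A\<close> B(1) C(1) by auto
    then have "g x / B * (k x / C) \<le> f x * h x"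
      using lower by (intro mult_mono') auto
    then show "g x * k x / (B * C) \<le> f x * h x"
      by simp
    have "f x * h x \<le> B * g x * (C * k x)"
      using lower upper \<open>0 \<le> g x / B\<close> \<open>0 \<le> k x / C\<close> by (intro mult_mono') auto
    then show "f x * h x \<le> B * C * (g x * k x)"
      by (simp add: ac_simps)
  qed
  with B(1) C(1) show ?thesis
    unfolding comparable_on_def by (intro exI[of _ "B * C"]) auto
qed

lemma comparable_on_compose:
  assumes "comparable_on B f g" "\<And>x. x \<in> A \<Longrightarrow> \<phi> x \<in> B"
  shows "comparable_on A (\<lambda>x. f (\<phi> x)) (\<lambda>x. g (\<phi> x))"
  using assms unfolding comparable_on_def by fastforce

lemma comparable_on_cong:
  assumes "comparable_on A f g" "\<And>x. x \<in> A \<Longrightarrow> f x = f' x" "\<And>x. x \<in> A \<Longrightarrow> g x = g' x"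
  shows "comparable_on A f' g'"
  using assms unfolding comparable_on_def by simp

lemma inverse_powr_self_bounds:
  fixes x :: real
  assumes "0 < x" "x \<le> 1"
  shows "1 \<le> (1 / x) powr x" "(1 / x) powr x \<le> exp 1"
proof -
  show "1 \<le> (1 / x) powr x"
    using assms by (simp add: ge_one_powr_ge_zero)
  have "x * ln (1 / x) \<le> x * (1 / x - 1)"
    using assms by (intro mult_left_mono ln_le_minus_one) auto
  also have "\<dots> \<le> 1"
    using assms by (simp add: field_simps)
  finally show "(1 / x) powr x \<le> exp 1"
    using assms by (simp add: powr_def)
qed

lemma powr_self_bounds:
  fixes x :: real
  assumes "0 < x" "x \<le> 1"
  shows "exp (-1) \<le> x powr x" "x powr x \<le> 1"
proof -
  have "1 / x powr x \<le> exp 1"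
    using inverse_powr_self_bounds(2)[OF assms] assms by (simp add: powr_divide)
  then show "exp (-1) \<le> x powr x"
    using assms by (simp add: exp_minus field_simps)
  show "x powr x \<le> 1"
    using assms by (simp add: powr_le1)
qed

lemma mult_inverse_powr_le:
  fixes u v :: real
  assumes "0 < u" "u \<le> 1" "0 < v" "v \<le> 1"
  shows "u * (1 / u) powr v \<le> exp 1 * (u + v)"
proof (cases "v \<le> u")
  case True
  have "(1 / u) powr v \<le> (1 / v) powr v"
    using assms True by (intro powr_mono2) (auto simp: divide_simps)
  also have "\<dots> \<le> exp 1"
    using inverse_powr_self_bounds assms by auto
  finally have "u * (1 / u) powr v \<le> u * exp 1"
    using assms by (intro mult_left_mono) auto
  moreover have "0 \<le> v * exp 1"
    using assms by simp
  ultimately show ?thesis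
    by (simp add: algebra_simps)
next
  case False
  have "u * (1 / u) powr v = u powr (1 - v)"
    using assms by (simp add: powr_diff powr_divide)
  also have "\<dots> \<le> v powr (1 - v)"
    using assms False by (intro powr_mono2) auto
  also have "\<dots> = v * (1 / v) powr v"
    using assms by (simp add: powr_diff powr_divide)
  also have "\<dots> \<le> v * exp 1"
    using inverse_powr_self_bounds[of v] assms by (intro mult_left_mono) auto
  finally have "u * (1 / u) powr v \<le> v * exp 1" .
  moreover have "0 \<le> u * exp 1"
    using assms by simp
  ultimately show ?thesis
    by (simp add: algebra_simps)
qed

text \<open>In the two definitions below, u stands for 1/p' and v for 1/q.\<close>

definition exponent_factor :: "real \<Rightarrow> real \<Rightarrow> real" where
  "exponent_factor u v = ((1 / u) powr (u + v) + (1 / v) powr (u + v)) * (1 - u) * (1 - v) / (u + v)"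

definition exponent_min :: "real \<Rightarrow> real \<Rightarrow> real" where
  "exponent_min u v = min ((1 / v) powr u * (1 - u) / u) ((1 / u) powr v * (1 - v) / v)"

lemma exponent_factor_commute: "exponent_factor u v = exponent_factor v u"
  unfolding exponent_factor_def by (simp add: ac_simps)

lemma exponent_min_pos:
  fixes u v :: real
  assumes "0 < u" "0 < v" "u + v \<le> 1"
  shows "0 < exponent_min u v"
proof -
  have "0 < (1 / v) powr u * (1 - u) / u" "0 < (1 / u) powr v * (1 - v) / v"
    using assms by (auto intro!: divide_pos_pos mult_pos_pos)
  then show ?thesis
    unfolding exponent_min_def by simp
qed

lemma exponent_factor_le:
  fixes u v :: real
  assumes "0 < u" "0 < v" "u + v \<le> 1"
  shows "exponent_factor u v \<le> exp 1 * (1 + exp 1) * ((1 / v) powr u * (1 - u) / u)"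
proof -
  define Y where "Y = (1 / v) powr u"
  have "1 \<le> Y"
    unfolding Y_def using assms by (intro ge_one_powr_ge_zero) auto
  have "(1 / u) powr (u + v) / (u + v) = (1 / u) powr u * ((1 / u) powr v / (u + v))"
    by (simp add: powr_add)
  also have "\<dots> \<le> exp 1 * (exp 1 / u)"
    using inverse_powr_self_bounds[of u] mult_inverse_powr_le[of u v] assms
    by (intro mult_mono) (auto simp: field_simps)
  also have "\<dots> \<le> exp 1 * exp 1 * Y / u"
    using \<open>1 \<le> Y\<close> assms by (simp add: divide_simps)
  finally have X: "(1 / u) powr (u + v) / (u + v) \<le> exp 1 * exp 1 * Y / u" .
  have "(1 / v) powr (u + v) / (u + v) = (1 / v) powr v * Y / (u + v)"
    unfolding Y_def by (simp add: powr_add)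
  also have "\<dots> \<le> exp 1 * Y / u"
    using inverse_powr_self_bounds[of v] \<open>1 \<le> Y\<close> assms
    by (intro frac_le mult_right_mono) auto
  finally have "((1 / u) powr (u + v) + (1 / v) powr (u + v)) / (u + v) \<le> exp 1 * (1 + exp 1) * Y / u"
    using X by (simp add: add_divide_distrib algebra_simps)
  moreover have "0 \<le> (1 - u) * (1 - v)"
    using assms by simp
  ultimately have "(1 - u) * (1 - v) * (((1 / u) powr (u + v) + (1 / v) powr (u + v)) / (u + v))
      \<le> (1 - u) * (1 - v) * (exp 1 * (1 + exp 1) * Y / u)"
    by (rule mult_left_mono)
  then have "exponent_factor u v \<le> (1 - u) * (1 - v) * (exp 1 * (1 + exp 1) * Y / u)"
    unfolding exponent_factor_def by (simp add: mult_ac)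
  also have "\<dots> \<le> (1 - u) * (exp 1 * (1 + exp 1) * Y / u)"
    using assms \<open>1 \<le> Y\<close> by (intro mult_right_mono mult_right_le_one_le) auto
  finally show ?thesis
    unfolding Y_def by (simp add: mult_ac)
qed

lemma le_exponent_factor:
  fixes u v :: real
  assumes "0 < u" "0 < v" "u + v \<le> 1" "v \<le> u"
  shows "(1 / v) powr u * (1 - u) / u \<le> 4 * exponent_factor u v"
proof -
  define Y where "Y = (1 / v) powr u"
  have "1 \<le> (1 / v) powr v"
    using assms by (intro ge_one_powr_ge_zero) auto
  then have "Y * (1 - u) * (1 / 2) \<le> (1 / v) powr v * Y * (1 - u) * (1 - v)"
    unfolding Y_def using assms by (intro mult_mono) auto
  also have "\<dots> \<le> ((1 / u) powr (u + v) + (1 / v) powr (u + v)) * (1 - u) * (1 - v)"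
    unfolding Y_def using assms by (intro mult_right_mono) (auto simp: powr_add)
  finally have "Y * (1 - u) * (1 / 2) / (2 * u) \<le> exponent_factor u v"
    unfolding exponent_factor_def using assms by (intro frac_le) auto
  then show ?thesis
    unfolding Y_def by simp
qed

lemma exponent_factor_bounds:
  fixes u v :: real
  assumes uv: "0 < u" "0 < v" "u + v \<le> 1"
  shows "exponent_min u v \<le> 4 * exponent_factor u v"
    and "exponent_factor u v \<le> exp 1 * (1 + exp 1) * exponent_min u v"
proof -
  show "exponent_min u v \<le> 4 * exponent_factor u v"
  proof (cases "v \<le> u")
    case True
    then show ?thesis
      using le_exponent_factor[OF uv] unfolding exponent_min_def by linarith
  next
    case False
    then show ?thesis
      using le_exponent_factor[of v u] uv
      unfolding exponent_min_def exponent_factor_commute[of u v] by (auto simp: add.commute)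
  qed
  show "exponent_factor u v \<le> exp 1 * (1 + exp 1) * exponent_min u v"
    using exponent_factor_le[OF uv] exponent_factor_le[of v u] uv
    unfolding exponent_min_def exponent_factor_commute[of u v] by (simp add: add.commute min_def)
qed

lemma exponent_factor_comparable:
  "comparable_on {(u, v). 0 < u \<and> 0 < v \<and> u + v \<le> 1}
     (case_prod exponent_factor) (case_prod exponent_min)"
proof -
  define c :: real where "c = exp 1 * (1 + exp 1)"
  have "2 * (1 + 2) \<le> c"
    using exp_ge_add_one_self[of 1] unfolding c_def by (intro mult_mono) auto
  then have "4 \<le> c"
    by simp
  have "exponent_min u v / c \<le> exponent_factor u v" "exponent_factor u v \<le> c * exponent_min u v"
    if uv: "0 < u" "0 < v" "u + v \<le> 1" for u v
  proof -
    have "0 \<le> exponent_factor u v"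
      unfolding exponent_factor_def using uv by auto
    then have "exponent_min u v \<le> c * exponent_factor u v"
      using exponent_factor_bounds(1)[OF uv] \<open>4 \<le> c\<close> by (meson mult_right_mono order.trans)
    then show "exponent_min u v / c \<le> exponent_factor u v"
      using \<open>4 \<le> c\<close> by (simp add: divide_le_eq mult.commute)
    show "exponent_factor u v \<le> c * exponent_min u v"
      using exponent_factor_bounds(2)[OF uv] unfolding c_def .
  qed
  moreover have "0 < c"
    using \<open>4 \<le> c\<close> by simp
  ultimately show ?thesis
    unfolding comparable_on_def by (intro exI[of _ c]) auto
qed

lemma Gamma_bounds_Icc:
  fixes a b :: real
  assumes "0 < a"
  obtains m M where "0 < m" "\<And>x. x \<in> {a..b} \<Longrightarrow> m \<le> Gamma x \<and> Gamma x \<le> M"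
proof (cases "a \<le> b")
  case True
  have cont: "continuous_on {a..b} Gamma"
    using assms by (intro continuous_on_Gamma) (auto elim!: nonpos_Ints_cases)
  obtain x0 where x0: "x0 \<in> {a..b}" "\<And>y. y \<in> {a..b} \<Longrightarrow> Gamma x0 \<le> Gamma y"
    using continuous_attains_inf[OF compact_Icc _ cont] True by auto
  obtain x1 where "\<forall>y\<in>{a..b}. Gamma y \<le> Gamma x1"
    using continuous_attains_sup[OF compact_Icc _ cont] True by auto
  moreover have "0 < Gamma x0"
    using x0(1) assms by auto
  ultimately show ?thesis
    using that x0(2) by blast
next
  case False
  then show ?thesis
    using that[of 1 0] by auto
qed

lemma powr_between_min_max:
  fixes a s :: real
  assumes "0 < a" "0 \<le> s" "s \<le> 1"
  shows "min 1 a \<le> a powr s" "a powr s \<le> max 1 a"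
proof -
  have "min 1 a \<le> a powr s \<and> a powr s \<le> max 1 a"
  proof (cases "1 \<le> a")
    case True
    have "a powr s \<le> a powr 1"
      using True assms by (intro powr_mono) auto
    then show ?thesis
      using True assms by (auto simp: ge_one_powr_ge_zero)
  next
    case False
    have "a powr 1 \<le> a powr s"
      using False assms by (intro powr_mono') auto
    then show ?thesis
      using False assms by (auto simp: powr_le1)
  qed
  then show "min 1 a \<le> a powr s" "a powr s \<le> max 1 a"
    by auto
qed

definition dim_factor :: "nat \<Rightarrow> real \<Rightarrow> real" where
  "dim_factor d \<alpha> = 1 / (2 * pi) powr \<alpha> * (Gamma ((real d - \<alpha>) / 2 + 1) / Gamma (\<alpha> / 2 + 1))
     * (sphere_area d / real d) powr (1 - \<alpha> / real d) * (1 - \<alpha> / real d) powr (1 - \<alpha> / real d)"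

lemma Gamma_ratio_comparable_one:
  "comparable_on {0<..<real d} (\<lambda>\<alpha>. Gamma ((real d - \<alpha>) / 2 + 1) / Gamma (\<alpha> / 2 + 1)) (\<lambda>_. 1)"
proof -
  obtain m M where m: "0 < m" and mM: "\<And>x. x \<in> {1..real d / 2 + 1} \<Longrightarrow> m \<le> Gamma x \<and> Gamma x \<le> M"
    using Gamma_bounds_Icc[of 1 "real d / 2 + 1"] by auto
  show ?thesis
  proof (rule comparable_on_oneI)
    fix \<alpha> assume "\<alpha> \<in> {0<..<real d}"
    then have "m \<le> Gamma ((real d - \<alpha>) / 2 + 1) \<and> Gamma ((real d - \<alpha>) / 2 + 1) \<le> M"
      "m \<le> Gamma (\<alpha> / 2 + 1) \<and> Gamma (\<alpha> / 2 + 1) \<le> M"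
      by (auto intro!: mM)
    with m show "m / M \<le> Gamma ((real d - \<alpha>) / 2 + 1) / Gamma (\<alpha> / 2 + 1)
        \<and> Gamma ((real d - \<alpha>) / 2 + 1) / Gamma (\<alpha> / 2 + 1) \<le> M / m"
      by (auto intro!: frac_le)
  next
    have "m \<le> M"
      using mM[of 1] by auto
    with m show "0 < m / M"
      by simp
  qed
qed

lemma dim_factor_comparable_one:
  assumes "0 < d"
  shows "comparable_on {0<..<real d} (dim_factor d) (\<lambda>_. 1)"
proof -
  define A where "A = sphere_area d / real d"
  have "0 < A"
    unfolding A_def sphere_area_def using assms by simp
  have s: "0 < 1 - \<alpha> / real d" "1 - \<alpha> / real d \<le> 1" if "\<alpha> \<in> {0<..<real d}" for \<alpha>
    using that by (auto simp: field_simps)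
  have "comparable_on {0<..<real d} (\<lambda>\<alpha>. 1 / (2 * pi) powr \<alpha>) (\<lambda>_. 1)"
  proof (rule comparable_on_oneI)
    fix \<alpha> :: real assume "\<alpha> \<in> {0<..<real d}"
    moreover have "1 \<le> 2 * pi"
      using pi_gt3 by linarith
    ultimately have "(2 * pi) powr \<alpha> \<le> (2 * pi) powr real d" "1 \<le> (2 * pi) powr \<alpha>"
      by (auto intro: powr_mono ge_one_powr_ge_zero)
    then show "1 / (2 * pi) powr real d \<le> 1 / (2 * pi) powr \<alpha> \<and> 1 / (2 * pi) powr \<alpha> \<le> 1"
      by (auto intro: divide_left_mono)
  qed simp
  moreover have "comparable_on {0<..<real d} (\<lambda>\<alpha>. A powr (1 - \<alpha> / real d)) (\<lambda>_. 1)"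
    using powr_between_min_max[OF \<open>0 < A\<close>] s \<open>0 < A\<close>
    by (intro comparable_on_oneI[of "min 1 A" _ _ "max 1 A"]) auto
  moreover have "comparable_on {0<..<real d}
      (\<lambda>\<alpha>. (1 - \<alpha> / real d) powr (1 - \<alpha> / real d)) (\<lambda>_. 1)"
    using powr_self_bounds s by (intro comparable_on_oneI[of "exp (-1)" _ _ 1]) auto
  ultimately have "comparable_on {0<..<real d} (\<lambda>\<alpha>. 1 / (2 * pi) powr \<alpha>
      * (Gamma ((real d - \<alpha>) / 2 + 1) / Gamma (\<alpha> / 2 + 1))
      * A powr (1 - \<alpha> / real d) * (1 - \<alpha> / real d) powr (1 - \<alpha> / real d)) (\<lambda>_. 1 * 1 * 1 * 1)"
    using Gamma_ratio_comparable_one by (intro comparable_on_mult) auto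
  then show ?thesis
    unfolding dim_factor_def A_def by simp
qed

lemma Gamma_divide_Gamma_shift:
  fixes a b :: real
  assumes "0 < a" "0 < b"
  shows "Gamma a / Gamma b = Gamma (a + 1) / Gamma (b + 1) * (b / a)"
proof -
  have "Gamma (a + 1) = a * Gamma a" "Gamma (b + 1) = b * Gamma b"
    using assms by (auto intro!: Gamma_plus1 dest: nonpos_Ints_nonpos)
  moreover have "0 < Gamma b"
    using assms by simp
  ultimately show ?thesis
    using assms by (simp add: field_simps)
qed

lemma sobolev_exponents:
  fixes p q \<alpha> :: real
  assumes "1 < p" "0 < \<alpha>" "\<alpha> < real d / p" "1 / q = 1 / p - \<alpha> / real d"
  shows "0 < real d" "\<alpha> < real d" "1 < q"
    and "1 - 1 / p + 1 / q = 1 - \<alpha> / real d"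
proof -
  show "0 < real d"
    using assms by (cases "d = 0") auto
  moreover have "real d / p < real d"
    using assms calculation by (simp add: divide_less_eq)
  ultimately show "\<alpha> < real d" "1 - 1 / p + 1 / q = 1 - \<alpha> / real d"
    using assms by auto
  have "\<alpha> / real d < 1 / p" "0 < \<alpha> / real d" "1 / p < 1"
    using assms \<open>0 < real d\<close> by (auto simp: field_simps)
  then have "0 < 1 / q" "1 / q < 1"
    using assms(4) by linarith+
  then show "1 < q"
    by (simp add: divide_less_eq split: if_splits)
qed

lemma S_pq_eq:
  fixes p q :: real
  assumes "1 < p" "1 < q"
  shows "S_pq p q = exponent_min (1 - 1 / p) (1 / q)"
proof -
  define u where "u = 1 - 1 / p"
  define v where "v = 1 / q"
  have "1 / conj_exp p = u" "conj_exp p = 1 / u" "q = 1 / v"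
    "1 / (p - 1) = (1 - u) / u" "1 / (conj_exp q - 1) = (1 - v) / v"
    unfolding u_def v_def conj_exp_def using assms by (auto simp: field_simps)
  moreover have "S_pq p q = min (q powr (1 / conj_exp p) * (1 / (p - 1)))
      (conj_exp p powr (1 / q) * (1 / (conj_exp q - 1)))"
    unfolding S_pq_def by simp
  ultimately show ?thesis
    unfolding exponent_min_def u_def[symmetric] v_def[symmetric] by simp
qed

lemma E_H_tilde_eq:
  fixes p q \<alpha> :: real
  assumes "1 < p" "0 < \<alpha>" "\<alpha> < real d / p" "1 / q = 1 / p - \<alpha> / real d"
  shows "E_H_tilde p q d = dim_factor d \<alpha> * exponent_factor (1 - 1 / p) (1 / q)"
proof -
  define u where "u = 1 - 1 / p"
  define v where "v = 1 / q"
  note exps = sobolev_exponents[OF assms]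
  have alpha: "real d * (1 / p - 1 / q) = \<alpha>"
    using assms(4) exps(1) by (simp add: field_simps)
  have s: "1 - \<alpha> / real d = u + v" and s': "1 / conj_exp p + 1 / q = u + v"
    unfolding u_def v_def conj_exp_def using exps(4) assms(1) by (auto simp: field_simps)
  have pq: "conj_exp p = 1 / u" "1 / (p * conj_exp q) = (1 - u) * (1 - v)"
    unfolding u_def v_def conj_exp_def using assms(1) exps(3) by (auto simp: field_simps)
  have "Gamma ((real d - \<alpha>) / 2) / Gamma (\<alpha> / 2)
      = Gamma ((real d - \<alpha>) / 2 + 1) / Gamma (\<alpha> / 2 + 1) * ((\<alpha> / 2) / ((real d - \<alpha>) / 2))"
    using assms(2) exps(2) by (intro Gamma_divide_Gamma_shift) auto
  then have "Gamma ((real d - \<alpha>) / 2) / Gamma (\<alpha> / 2) * (real d / \<alpha>)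
      = Gamma ((real d - \<alpha>) / 2 + 1) / Gamma (\<alpha> / 2 + 1)
        * ((\<alpha> / 2) / ((real d - \<alpha>) / 2) * (real d / \<alpha>))"
    by (simp only: mult.assoc)
  also have "(\<alpha> / 2) / ((real d - \<alpha>) / 2) * (real d / \<alpha>) = 1 / (u + v)"
    unfolding s[symmetric] using assms(2) exps(1,2) by (simp add: field_simps)
  finally have Gamma: "Gamma ((real d - \<alpha>) / 2) / Gamma (\<alpha> / 2) * (real d / \<alpha>)
      = Gamma ((real d - \<alpha>) / 2 + 1) / Gamma (\<alpha> / 2 + 1) / (u + v)"
    by simp
  have "0 < u + v"
    unfolding s[symmetric] using exps(1,2) by simp
  have "E_H_tilde p q d = 1 / (2 * pi) powr \<alpha>
      * (Gamma ((real d - \<alpha>) / 2) / Gamma (\<alpha> / 2) * (real d / \<alpha>))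
      * (sphere_area d / real d) powr (1 - \<alpha> / real d) * (1 - \<alpha> / real d) powr (1 - \<alpha> / real d)
      * (1 / (p * conj_exp q)) * (conj_exp p powr (1 / conj_exp p + 1 / q) + q powr (1 / conj_exp p + 1 / q))"
    unfolding E_H_tilde_def Let_def alpha by (simp only: mult.assoc)
  also have "\<dots> = 1 / (2 * pi) powr \<alpha>
      * (Gamma ((real d - \<alpha>) / 2 + 1) / Gamma (\<alpha> / 2 + 1) / (u + v))
      * (sphere_area d / real d) powr (u + v) * (u + v) powr (u + v)
      * ((1 - u) * (1 - v)) * ((1 / u) powr (u + v) + (1 / v) powr (u + v))"
    unfolding Gamma s s' pq unfolding v_def by simp
  also have "\<dots> = dim_factor d \<alpha> * exponent_factor u v"
    unfolding dim_factor_def exponent_factor_def s using \<open>0 < u + v\<close> by (simp add: field_simps)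
  finally show ?thesis
    unfolding u_def v_def .
qed

definition sobolev_params :: "nat \<Rightarrow> (real \<times> real \<times> real) set" where
  "sobolev_params d = {(p, \<alpha>, q). 1 < p \<and> 0 < \<alpha> \<and> \<alpha> < real d / p \<and> 1 / q = 1 / p - \<alpha> / real d}"

lemma sobolev_params_reparam:
  assumes "(p, \<alpha>, q) \<in> sobolev_params d"
  shows "\<alpha> \<in> {0<..<real d}" "(1 - 1 / p, 1 / q) \<in> {(u, v). 0 < u \<and> 0 < v \<and> u + v \<le> 1}"
proof -
  have h: "1 < p" "0 < \<alpha>" "\<alpha> < real d / p" "1 / q = 1 / p - \<alpha> / real d"
    using assms by (auto simp: sobolev_params_def)
  note exps = sobolev_exponents[OF h]
  show "\<alpha> \<in> {0<..<real d}"
    using h(2) exps(2) by simp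
  have "0 \<le> \<alpha> / real d"
    using h(2) exps(1) by simp
  then have "1 - 1 / p + 1 / q \<le> 1"
    using exps(4) by linarith
  moreover have "0 < 1 - 1 / p" "0 < 1 / q"
    using h(1) exps(3) by auto
  ultimately show "(1 - 1 / p, 1 / q) \<in> {(u, v). 0 < u \<and> 0 < v \<and> u + v \<le> 1}"
    by simp
qed

lemma E_H_tilde_comparable_S_pq:
  assumes "0 < d"
  shows "comparable_on (sobolev_params d) (\<lambda>(p, \<alpha>, q). E_H_tilde p q d) (\<lambda>(p, \<alpha>, q). S_pq p q)"
proof -
  let ?P = "sobolev_params d"
  note reparam = sobolev_params_reparam
  have "comparable_on ?P (\<lambda>(p, \<alpha>, q). dim_factor d \<alpha>) (\<lambda>_. 1)"
    by (rule comparable_on_cong[OF comparable_on_compose[OF dim_factor_comparable_one,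
          of d ?P "\<lambda>(p, \<alpha>, q). \<alpha>"]]) (use assms reparam in auto)
  moreover have "comparable_on ?P (\<lambda>(p, \<alpha>, q). exponent_factor (1 - 1 / p) (1 / q))
      (\<lambda>(p, \<alpha>, q). exponent_min (1 - 1 / p) (1 / q))"
    by (rule comparable_on_cong[OF comparable_on_compose[OF exponent_factor_comparable,
          of ?P "\<lambda>(p, \<alpha>, q). (1 - 1 / p, 1 / q)"]]) (use reparam in auto)
  ultimately have "comparable_on ?P
      (\<lambda>x. (case x of (p, \<alpha>, q) \<Rightarrow> dim_factor d \<alpha>)
        * (case x of (p, \<alpha>, q) \<Rightarrow> exponent_factor (1 - 1 / p) (1 / q)))
      (\<lambda>x. 1 * (case x of (p, \<alpha>, q) \<Rightarrow> exponent_min (1 - 1 / p) (1 / q)))"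
    by (rule comparable_on_mult) (use reparam exponent_min_pos in \<open>auto intro: less_imp_le\<close>)
  then show ?thesis
  proof (rule comparable_on_cong; clarify)
    fix p \<alpha> q assume "(p, \<alpha>, q) \<in> ?P"
    then have h: "1 < p" "0 < \<alpha>" "\<alpha> < real d / p" "1 / q = 1 / p - \<alpha> / real d"
      by (auto simp: sobolev_params_def)
    show "dim_factor d \<alpha> * exponent_factor (1 - 1 / p) (1 / q) = E_H_tilde p q d"
      using E_H_tilde_eq[OF h] by simp
    show "1 * exponent_min (1 - 1 / p) (1 / q) = S_pq p q"
      using S_pq_eq h(1) sobolev_exponents(3)[OF h] by simp
  qed
qed

theorem theorem4p2:
  fixes d :: nat
  assumes "d \<ge> 1"
  shows "\<exists>B3 > 0. \<forall>p \<alpha> q :: real.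
           1 < p \<and> 0 < \<alpha> \<and> \<alpha> < real d / p \<and> p \<le> q \<and> 1 / q = 1 / p - \<alpha> / real d \<longrightarrow>
           S_pq p q / B3 \<le> E_H_tilde p q d \<and> E_H_tilde p q d \<le> B3 * S_pq p q"
proof -
  have "comparable_on (sobolev_params d) (\<lambda>(p, \<alpha>, q). E_H_tilde p q d) (\<lambda>(p, \<alpha>, q). S_pq p q)"
    using assms by (intro E_H_tilde_comparable_S_pq) simp
  then show ?thesis
    unfolding comparable_on_def sobolev_params_def by fastforce
qed

end
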